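(* Let $n\le -1$ be an odd integer. Then $$q_n(w)=\frac{p_n(v)\,p_{6-n}(v)}{v^{2-n}}\qquad\text{where } w=2-\frac{(v+1)(v+2)}{v},$$ as an identity of rational functions in $v$.
   Context: Define polynomials $p_n\in\mathbb{Z}[v]$ for odd $n$ as follows. For odd $n\le -1$: $p_{-1}=v^3+2v^2+v+1$, $p_{-3}=-(v^5+3v^4+4v^3+5v^2+4v+2)$, and $p_n=-\big((v^2+v+2)p_{n+2}+v^2p_{n+4}\big)$ for odd $n<-3$. For odd $n\ge 7$: $p_7=-(v^3+2v^2+8v+8)$, $p_9=v^5+4v^4+10v^3+16v^2+24v+16$, and $p_n=-\big((v^2+v+2)p_{n-2}+v^2p_{n-4}\big)$ for odd $n>9$. Define $q_n\in\mathbb{Z}[w]$ for odd $n\le -1$ by $q_{-1}=w^3-w^2+2w-7$, $q_{-3}=w^5-2w^4-2w^3+5w^2+3w-9$, $q_{-5}=w^7-2w^6-4w^5+8w^4+4w^3-7w^2+2w-7$, and $q_n=(w^2-1)(q_{n+2}-q_{n+4})+q_{n+6}$ for odd $n<-5$. *)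

theory Defs
  imports "HOL-Computational_Algebra.Polynomial"
begin

text \<open>pneg k = p_{-(2k+1)}, for k = 0,1,2,...\<close>
fun pneg :: "nat \<Rightarrow> int poly" where
  "pneg 0 = [:1, 1, 2, 1:]"
| "pneg (Suc 0) = - [:2, 4, 5, 4, 3, 1:]"
| "pneg (Suc (Suc k)) = - ([:2, 1, 1:] * pneg (Suc k) + [:0, 0, 1:] * pneg k)"

text \<open>ppos k = p_{2k+7}, for k = 0,1,2,...\<close>
fun ppos :: "nat \<Rightarrow> int poly" where
  "ppos 0 = - [:8, 8, 2, 1:]"
| "ppos (Suc 0) = [:16, 24, 16, 10, 4, 1:]"
| "ppos (Suc (Suc k)) = - ([:2, 1, 1:] * ppos (Suc k) + [:0, 0, 1:] * ppos k)"

text \<open>p_n for odd n with n \<le> -1 or n \<ge> 7 (value 0 elsewhere, never used)\<close>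
definition p :: "int \<Rightarrow> int poly" where
  "p n = (if odd n \<and> n \<le> -1 then pneg (nat ((- n - 1) div 2))
          else if odd n \<and> 7 \<le> n then ppos (nat ((n - 7) div 2))
          else 0)"

text \<open>qneg k = q_{-(2k+1)}, in the variable w\<close>
fun qneg :: "nat \<Rightarrow> int poly" where
  "qneg 0 = [:-7, 2, -1, 1:]"
| "qneg (Suc 0) = [:-9, 3, 5, -2, -2, 1:]"
| "qneg (Suc (Suc 0)) = [:-7, 2, -7, 4, 8, -4, -2, 1:]"
| "qneg (Suc (Suc (Suc k))) =
     [:-1, 0, 1:] * (qneg (Suc (Suc k)) - qneg (Suc k)) + qneg k"

definition q :: "int \<Rightarrow> int poly" where
  "q n = (if odd n \<and> n \<le> -1 then qneg (nat ((- n - 1) div 2)) else 0)"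

end

theory Submission
  imports Defs
begin

text \<open>
  Write n = -(2k+1), so that p_n = pneg k, p_{6-n} = ppos k, q_n = qneg k and
  v^(2-n) = v^(2k+3).  Both pneg and ppos satisfy the second order recurrence
  x_{k+2} = -(c x_{k+1} + v^2 x_k) with c = v^2 + v + 2.  Termwise products of
  two solutions of such a recurrence satisfy a third order recurrence (the
  symmetric square); dividing the k-th product by v^(2k+3) turns it into
  exactly the recurrence of qneg in the variable w = -c/v, and -c/v is the
  substitution w = 2 - (v+1)(v+2)/v of the theorem.  Since a solution of a
  third order recurrence is determined by three initial values, it remains to
  check the identity for k = 0, 1, 2 by direct computation.
\<close>

abbreviation int_poly_eval :: "int poly \<Rightarrow> 'a::comm_ring_1 \<Rightarrow> 'a" where
  "int_poly_eval f x \<equiv> poly (map_poly of_int f) x"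

lemma int_poly_eval_hom:
  fixes x :: "'a::comm_ring_1"
  shows "int_poly_eval (f + g) x = int_poly_eval f x + int_poly_eval g x"
    and "int_poly_eval (f - g) x = int_poly_eval f x - int_poly_eval g x"
    and "int_poly_eval (- f) x = - int_poly_eval f x"
    and "int_poly_eval (f * g) x = int_poly_eval f x * int_poly_eval g x"
    and "int_poly_eval (smult a f) x = of_int a * int_poly_eval f x"
proof -
  have "map_poly (of_int :: int \<Rightarrow> 'a) (f * g) = map_poly of_int f * map_poly of_int g"
    by (simp add: poly_eq_iff coeff_map_poly coeff_mult)
  moreover have "map_poly (of_int :: int \<Rightarrow> 'a) (f + g) = map_poly of_int f + map_poly of_int g"
    and "map_poly (of_int :: int \<Rightarrow> 'a) (f - g) = map_poly of_int f - map_poly of_int g"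
    and "map_poly (of_int :: int \<Rightarrow> 'a) (- f) = - map_poly of_int f"
    and "map_poly (of_int :: int \<Rightarrow> 'a) (smult a f) = smult (of_int a) (map_poly of_int f)"
    by (simp_all add: poly_eq_iff coeff_map_poly)
  ultimately show "int_poly_eval (f + g) x = int_poly_eval f x + int_poly_eval g x"
    and "int_poly_eval (f - g) x = int_poly_eval f x - int_poly_eval g x"
    and "int_poly_eval (- f) x = - int_poly_eval f x"
    and "int_poly_eval (f * g) x = int_poly_eval f x * int_poly_eval g x"
    and "int_poly_eval (smult a f) x = of_int a * int_poly_eval f x"
    by simp_all
qed

lemma product_recurrence:
  fixes x y :: "nat \<Rightarrow> 'a::comm_ring_1"
  assumes x: "\<And>k. x (k + 2) = - (c * x (k + 1) + d * x k)"
      and y: "\<And>k. y (k + 2) = - (c * y (k + 1) + d * y k)"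
  shows "x (k + 3) * y (k + 3)
         = (c\<^sup>2 - d) * (x (k + 2) * y (k + 2) - d * (x (k + 1) * y (k + 1))) + d ^ 3 * (x k * y k)"
proof -
  have shift: "k + 1 + 2 = k + 3" "k + 1 + 1 = k + 2" by simp_all
  note x3 = x[of "k + 1", unfolded shift] and y3 = y[of "k + 1", unfolded shift]
  have ring_identity:
    "(- (c * a2 + d * a1)) * (- (c * b2 + d * b1))
     = (c\<^sup>2 - d) * (a2 * b2 - d * (a1 * b1)) + d ^ 3 * (a0 * b0)"
    if "a2 = - (c * a1 + d * a0)" "b2 = - (c * b1 + d * b0)" for a0 a1 a2 b0 b1 b2 :: 'a
    unfolding that power2_eq_square power3_eq_cube by (simp add: algebra_simps)
  show ?thesis unfolding x3 y3 by (rule ring_identity[OF x[of k] y[of k]])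
qed

lemma scaled_product_recurrence:
  fixes x y :: "nat \<Rightarrow> 'a::field"
  assumes v: "v \<noteq> 0"
      and x: "\<And>k. x (k + 2) = - (c * x (k + 1) + v\<^sup>2 * x k)"
      and y: "\<And>k. y (k + 2) = - (c * y (k + 1) + v\<^sup>2 * y k)"
  shows "x (k + 3) * y (k + 3) / v ^ (m + 6)
         = ((c / v)\<^sup>2 - 1) * (x (k + 2) * y (k + 2) / v ^ (m + 4) - x (k + 1) * y (k + 1) / v ^ (m + 2))
           + x k * y k / v ^ m"
proof -
  have "x (k + 3) * y (k + 3) / v ^ (m + 6)
        = ((c\<^sup>2 - v\<^sup>2) * (x (k + 2) * y (k + 2) - v\<^sup>2 * (x (k + 1) * y (k + 1)))
           + (v\<^sup>2) ^ 3 * (x k * y k)) / v ^ (m + 6)"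
    by (simp only: product_recurrence[OF x y])
  also have "\<dots> = ((c / v)\<^sup>2 - 1) * (x (k + 2) * y (k + 2) / v ^ (m + 4) - x (k + 1) * y (k + 1) / v ^ (m + 2))
                 + x k * y k / v ^ m"
    using v by (simp add: field_simps power_add) algebra
  finally show ?thesis .
qed

lemma third_order_recurrence_unique:
  fixes f g :: "nat \<Rightarrow> 'a::comm_ring_1"
  assumes f: "\<And>k. f (k + 3) = a * (f (k + 2) - f (k + 1)) + f k"
      and g: "\<And>k. g (k + 3) = a * (g (k + 2) - g (k + 1)) + g k"
      and "f 0 = g 0" "f 1 = g 1" "f 2 = g 2"
  shows "f k = g k"
proof -
  have "f k = g k \<and> f (k + 1) = g (k + 1) \<and> f (k + 2) = g (k + 2)"
  proof (induction k)
    case 0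
    then show ?case using assms(3-5) by (simp add: numeral_2_eq_2)
  next
    case (Suc k)
    then have "f (k + 3) = g (k + 3)" by (simp add: f g)
    with Suc show ?case by (simp add: numeral_3_eq_3)
  qed
  then show ?thesis by simp
qed

lemma pneg_recurrence:
  fixes v :: "'a::comm_ring_1"
  shows "int_poly_eval (pneg (k + 2)) v
         = - ((v\<^sup>2 + v + 2) * int_poly_eval (pneg (k + 1)) v + v\<^sup>2 * int_poly_eval (pneg k) v)"
  by (simp add: int_poly_eval_hom map_poly_pCons algebra_simps power2_eq_square)

lemma ppos_recurrence:
  fixes v :: "'a::comm_ring_1"
  shows "int_poly_eval (ppos (k + 2)) v
         = - ((v\<^sup>2 + v + 2) * int_poly_eval (ppos (k + 1)) v + v\<^sup>2 * int_poly_eval (ppos k) v)"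
  by (simp add: int_poly_eval_hom map_poly_pCons algebra_simps power2_eq_square)

lemma qneg_recurrence:
  fixes w :: "'a::comm_ring_1"
  shows "int_poly_eval (qneg (k + 3)) w
         = (w\<^sup>2 - 1) * (int_poly_eval (qneg (k + 2)) w - int_poly_eval (qneg (k + 1)) w)
           + int_poly_eval (qneg k) w"
  by (simp add: numeral_3_eq_3 int_poly_eval_hom map_poly_pCons algebra_simps power2_eq_square)

lemma substitution_eq:
  fixes v :: "'a::field"
  assumes "v \<noteq> 0"
  shows "2 - (v + 1) * (v + 2) / v = - ((v\<^sup>2 + v + 2) / v)"
  using assms by (simp add: field_simps power2_eq_square)

lemma initial_values:
  fixes v :: "'a::field_char_0"
  assumes v: "v \<noteq> 0" and k: "k < 3"
  defines "w \<equiv> - ((v\<^sup>2 + v + 2) / v)"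
  shows "int_poly_eval (qneg k) w = int_poly_eval (pneg k) v * int_poly_eval (ppos k) v / v ^ (2 * k + 3)"
proof -
  have pneg2: "pneg 2 = - ([:2, 1, 1:] * pneg 1 + [:0, 0, 1:] * pneg 0)"
   and ppos2: "ppos 2 = - ([:2, 1, 1:] * ppos 1 + [:0, 0, 1:] * ppos 0)"
   and qneg2: "qneg 2 = [:-7, 2, -7, 4, 8, -4, -2, 1:]"
    by (simp_all add: numeral_2_eq_2)
  consider "k = 0" | "k = 1" | "k = 2" using k by linarith
  then show ?thesis
    by cases
      (use v in \<open>simp_all add: w_def pneg2 ppos2 qneg2 int_poly_eval_hom map_poly_pCons
                   field_simps power_divide eval_nat_numeral\<close>; algebra)+
qed

text \<open>The identity in terms of the index k of the defining recurrences: both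
  sides solve the qneg recurrence and agree at k = 0, 1, 2.\<close>

lemma qneg_pneg_ppos:
  fixes v :: "'a::field_char_0"
  assumes v: "v \<noteq> 0"
  shows "int_poly_eval (qneg k) (2 - (v + 1) * (v + 2) / v)
         = int_poly_eval (pneg k) v * int_poly_eval (ppos k) v / v ^ (2 * k + 3)"
proof -
  let ?c = "v\<^sup>2 + v + 2"
  let ?w = "- (?c / v)"
  let ?prod = "\<lambda>k. int_poly_eval (pneg k) v * int_poly_eval (ppos k) v / v ^ (2 * k + 3)"
  have initial: "int_poly_eval (qneg i) ?w = ?prod i" if "i < 3" for i
    using initial_values[OF v that] by simp
  have "int_poly_eval (qneg k) ?w = ?prod k"
  proof (rule third_order_recurrence_unique[where f = "\<lambda>k. int_poly_eval (qneg k) ?w" and g = ?prod])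
    show "int_poly_eval (qneg (j + 3)) ?w
          = (?w\<^sup>2 - 1) * (int_poly_eval (qneg (j + 2)) ?w - int_poly_eval (qneg (j + 1)) ?w)
            + int_poly_eval (qneg j) ?w" for j
      by (rule qneg_recurrence)
    show "?prod (j + 3) = (?w\<^sup>2 - 1) * (?prod (j + 2) - ?prod (j + 1)) + ?prod j" for j
    proof -
      have exponents: "2 * (j + 3) + 3 = (2 * j + 3) + 6" "2 * (j + 2) + 3 = (2 * j + 3) + 4"
        "2 * (j + 1) + 3 = (2 * j + 3) + 2" by simp_all
      have "?w\<^sup>2 = (?c / v)\<^sup>2" by simp
      then show ?thesis unfolding exponents
        by (simp only: scaled_product_recurrence[where x = "\<lambda>k. int_poly_eval (pneg k) v"
              and y = "\<lambda>k. int_poly_eval (ppos k) v", OF v pneg_recurrence ppos_recurrence])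
    qed
    show "int_poly_eval (qneg 0) ?w = ?prod 0" "int_poly_eval (qneg 1) ?w = ?prod 1"
      "int_poly_eval (qneg 2) ?w = ?prod 2" by (rule initial, simp)+
  qed
  then show ?thesis by (simp add: substitution_eq[OF v])
qed

theorem lemma3p1:
  fixes n :: int and v :: "'a :: field_char_0"
  assumes "odd n" and "n \<le> -1" and "v \<noteq> 0"
  shows "poly (map_poly of_int (q n)) (2 - (v + 1) * (v + 2) / v)
         = poly (map_poly of_int (p n)) v * poly (map_poly of_int (p (6 - n))) v / v ^ nat (2 - n)"
proof -
  obtain k :: nat where n: "n = - (2 * int k + 1)"
  proof -
    obtain b where b: "n = 2 * b + 1" using assms(1) by (elim oddE)
    with assms(2) have "n = - (2 * int (nat (- b - 1)) + 1)" by simp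
    then show thesis by (rule that)
  qed
  have "q n = qneg k" "p n = pneg k" "p (6 - n) = ppos k" "nat (2 - n) = 2 * k + 3"
    unfolding q_def p_def n by simp_all
  then show ?thesis using qneg_pneg_ppos[OF assms(3), of k] by simp
qed

end
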